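(* Let $G$ be a group, $s$ a central involution of $G$, and $(L,\zeta)$ a connected $G$-gain graph such that $L$ is isomorphic to the line graph $L(\Gamma)$ of some graph $\Gamma$ and $L$ is not isomorphic to any of $F_1,F_2,F_3$. Then $(L,\zeta)$ is a gain-line graph if and only if every odd triangle of $L$ has gain $s$.
   Context: Graphs are finite and simple. A $G$-gain graph $(\Gamma,\psi)$: graph with a map $\psi$ on ordered pairs of adjacent vertices into $G$ with $\psi(v,u)=\psi(u,v)^{-1}$. Line graph $L(\Gamma)$: vertex set $E_\Gamma$, edges adjacent iff sharing an endpoint. With $V_\Gamma=\{v_1,\dots,v_n\}$, $E_\Gamma=\{e_1,\dots,e_m\}$, a $G$-phase of $\Gamma$ is a matrix $H$ with $H_{i,k}\in G$ if $v_i\in e_k$, $0$ otherwise; $\Psi_L(H)(e_p,e_q)=s\,(H_{r,p})^{-1}H_{r,q}$ with $v_r$ the common endpoint of $e_p,e_q$. $(L,\zeta)$ is a gain-line graph (w.r.t. $s$) if there are a graph $\Gamma$, a graph isomorphism $\phi:L(\Gamma)\to L$ and a $G$-phase $H$ of $\Gamma$ with $\Psi_L(H)=\zeta\circ\phi$. A triangle's gain is $\zeta(v_1,v_2)\zeta(v_2,v_3)\zeta(v_3,v_1)$ (whether it equals the central element $s$ is independent of starting vertex and orientation). A triangle $\{v_1,v_2,v_3\}$ is odd if some vertex $w$ of $L$ is adjacent to an odd number of $v_1,v_2,v_3$. $F_1$ is the diamond ($K_4$ minus an edge); $F_2$ is the wheel consisting of a $4$-cycle and a hub adjacent to its four vertices;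 $F_3$ is the octahedron $K_{2,2,2}$. *)

theory Defs
  imports Main
begin

text \<open>The group G is the type 'g of class group_add (not assumed commutative), written
additively: the group product is +, the identity is 0, the inverse is unary minus.\<close>

definition simple_graph :: "'v set \<Rightarrow> ('v \<Rightarrow> 'v \<Rightarrow> bool) \<Rightarrow> bool" where
  "simple_graph V A \<longleftrightarrow> finite V \<and> (\<forall>u v. A u v \<longrightarrow> u \<in> V \<and> v \<in> V \<and> u \<noteq> v)
     \<and> (\<forall>u v. A u v \<longrightarrow> A v u)"

definition graph_connected :: "'v set \<Rightarrow> ('v \<Rightarrow> 'v \<Rightarrow> bool) \<Rightarrow> bool" where
  "graph_connected V A \<longleftrightarrow> V \<noteq> {} \<and> (\<forall>u\<in>V. \<forall>v\<in>V. A\<^sup>*\<^sup>* u v)"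

definition graph_iso :: "'a set \<Rightarrow> ('a \<Rightarrow> 'a \<Rightarrow> bool) \<Rightarrow> 'b set \<Rightarrow> ('b \<Rightarrow> 'b \<Rightarrow> bool)
    \<Rightarrow> ('a \<Rightarrow> 'b) \<Rightarrow> bool" where
  "graph_iso V1 A1 V2 A2 \<phi> \<longleftrightarrow> bij_betw \<phi> V1 V2 \<and>
     (\<forall>x\<in>V1. \<forall>y\<in>V1. A1 x y \<longleftrightarrow> A2 (\<phi> x) (\<phi> y))"

definition isomorphic :: "'a set \<Rightarrow> ('a \<Rightarrow> 'a \<Rightarrow> bool) \<Rightarrow> 'b set \<Rightarrow> ('b \<Rightarrow> 'b \<Rightarrow> bool) \<Rightarrow> bool" where
  "isomorphic V1 A1 V2 A2 \<longleftrightarrow> (\<exists>\<phi>. graph_iso V1 A1 V2 A2 \<phi>)"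

text \<open>A finite simple graph Gamma given by vertex set W and edge set Ed (each edge a
2-element subset of W). Vertices are taken in nat (every finite graph has such a copy).\<close>
definition edge_graph :: "nat set \<Rightarrow> nat set set \<Rightarrow> bool" where
  "edge_graph W Ed \<longleftrightarrow> finite W \<and> (\<forall>e\<in>Ed. e \<subseteq> W \<and> card e = 2)"

definition line_adj :: "nat set set \<Rightarrow> nat set \<Rightarrow> nat set \<Rightarrow> bool" where
  "line_adj Ed p q \<longleftrightarrow> p \<in> Ed \<and> q \<in> Ed \<and> p \<noteq> q \<and> p \<inter> q \<noteq> {}"

definition gain_graph :: "'v set \<Rightarrow> ('v \<Rightarrow> 'v \<Rightarrow> bool) \<Rightarrow> ('v \<Rightarrow> 'v \<Rightarrow> 'g::group_add) \<Rightarrow> bool" where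
  "gain_graph V A \<zeta> \<longleftrightarrow> simple_graph V A \<and> (\<forall>u v. A u v \<longrightarrow> \<zeta> v u = - \<zeta> u v)"

text \<open>Gain-line graph w.r.t. s: there are a graph Gamma, an isomorphism phi from L(Gamma) to L,
and a G-phase H of Gamma (H r e is the entry for the incident pair vertex r, edge e; entries for
non-incident pairs are irrelevant) with Psi_L(H) = zeta o phi, where
Psi_L(H)(p,q) = s (H r p)^-1 (H r q) for the common endpoint r of p and q.\<close>
definition gain_line_graph :: "'g::group_add \<Rightarrow> 'v set \<Rightarrow> ('v \<Rightarrow> 'v \<Rightarrow> bool) \<Rightarrow> ('v \<Rightarrow> 'v \<Rightarrow> 'g) \<Rightarrow> bool" where
  "gain_line_graph s V A \<zeta> \<longleftrightarrow>
     (\<exists>W Ed \<phi> (H :: nat \<Rightarrow> nat set \<Rightarrow> 'g).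
        edge_graph W Ed \<and> graph_iso Ed (line_adj Ed) V A \<phi> \<and>
        (\<forall>p\<in>Ed. \<forall>q\<in>Ed. \<forall>r. p \<noteq> q \<and> r \<in> p \<and> r \<in> q \<longrightarrow>
            \<zeta> (\<phi> p) (\<phi> q) = s + - H r p + H r q))"

definition triangle :: "'v set \<Rightarrow> ('v \<Rightarrow> 'v \<Rightarrow> bool) \<Rightarrow> 'v \<Rightarrow> 'v \<Rightarrow> 'v \<Rightarrow> bool" where
  "triangle V A a b c \<longleftrightarrow> a \<in> V \<and> b \<in> V \<and> c \<in> V \<and> A a b \<and> A b c \<and> A c a"

definition odd_triangle :: "'v set \<Rightarrow> ('v \<Rightarrow> 'v \<Rightarrow> bool) \<Rightarrow> 'v \<Rightarrow> 'v \<Rightarrow> 'v \<Rightarrow> bool" where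
  "odd_triangle V A a b c \<longleftrightarrow> triangle V A a b c \<and>
     (\<exists>w\<in>V. odd (card {x \<in> {a, b, c}. A w x}))"

definition triangle_gain :: "('v \<Rightarrow> 'v \<Rightarrow> 'g::group_add) \<Rightarrow> 'v \<Rightarrow> 'v \<Rightarrow> 'v \<Rightarrow> 'g" where
  "triangle_gain \<zeta> a b c = \<zeta> a b + \<zeta> b c + \<zeta> c a"

text \<open>F1: diamond (K4 minus the edge 2-3).\<close>
definition F1_adj :: "nat \<Rightarrow> nat \<Rightarrow> bool" where
  "F1_adj x y \<longleftrightarrow> x < 4 \<and> y < 4 \<and> x \<noteq> y \<and> {x, y} \<noteq> {2, 3}"

text \<open>F2: wheel with hub 0 and 4-cycle 1-2-3-4-1.\<close>
definition F2_adj :: "nat \<Rightarrow> nat \<Rightarrow> bool" where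
  "F2_adj x y \<longleftrightarrow> {x, y} \<in> {{0,1},{0,2},{0,3},{0,4},{1,2},{2,3},{3,4},{4,1}}"

text \<open>F3: octahedron K_{2,2,2} with parts {0,1},{2,3},{4,5}.\<close>
definition F3_adj :: "nat \<Rightarrow> nat \<Rightarrow> bool" where
  "F3_adj x y \<longleftrightarrow> x < 6 \<and> y < 6 \<and> x div 2 \<noteq> y div 2"

end

theory Submission
  imports Defs
begin

text \<open>
  A triangle of a line graph L(\<Gamma>) consists either of three edges of \<Gamma> through a common
  vertex (a star triangle) or of the three edges of a triangle of \<Gamma>. Every edge of \<Gamma> meets an
  even number of the edges of a triangle of \<Gamma>, so odd triangles are star triangles. In a
  gain-line graph a star triangle at r has gain
  (s - H r p + H r q) + (s - H r q + H r t) + (s - H r t + H r p) = s + s + s = s,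
  as s is a central involution. Conversely, if every star triangle has gain s, the gains from a
  fixed reference edge at each vertex r of \<Gamma> form a phase.

  So it suffices to pick a root graph \<Gamma> whose star triangles are all odd. If the star triangle of
  the edges ra, rb, rc is even, then every edge meeting {r, a, b, c} lies inside this set, so by
  connectivity \<Gamma> lives on these four vertices: L is then F1, F2, F3, or the line graph of the
  claw, which is also the line graph of a triangle, a root graph without star triangles.
\<close>

section \<open>Graph isomorphisms\<close>

lemma graph_iso_inv_into:
  assumes "graph_iso V1 A1 V2 A2 f"
  shows "graph_iso V2 A2 V1 A1 (inv_into V1 f)"
proof -
  have bij: "bij_betw f V1 V2" and adj: "\<forall>x\<in>V1. \<forall>y\<in>V1. A1 x y \<longleftrightarrow> A2 (f x) (f y)"
    using assms unfolding graph_iso_def by auto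
  have "A2 x y \<longleftrightarrow> A1 (inv_into V1 f x) (inv_into V1 f y)" if "x \<in> V2" "y \<in> V2" for x y
    using adj that bij bij_betw_inv_into_right[OF bij] bij_betw_apply[OF bij_betw_inv_into[OF bij]]
    by metis
  then show ?thesis
    unfolding graph_iso_def using bij_betw_inv_into[OF bij] by blast
qed

lemma graph_iso_comp:
  assumes "graph_iso V1 A1 V2 A2 f" "graph_iso V2 A2 V3 A3 g"
  shows "graph_iso V1 A1 V3 A3 (g \<circ> f)"
  using assms unfolding graph_iso_def
  by (auto intro: bij_betw_trans) (metis bij_betw_apply)+

lemma isomorphic_sym: "isomorphic V1 A1 V2 A2 \<Longrightarrow> isomorphic V2 A2 V1 A1"
  unfolding isomorphic_def using graph_iso_inv_into by blast

lemma isomorphic_trans: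
  "isomorphic V1 A1 V2 A2 \<Longrightarrow> isomorphic V2 A2 V3 A3 \<Longrightarrow> isomorphic V1 A1 V3 A3"
  unfolding isomorphic_def using graph_iso_comp by blast

lemma isomorphic_listing:
  assumes "distinct xs" "length xs = n"
    and "\<forall>i\<in>{..<n}. \<forall>j\<in>{..<n}. B i j \<longleftrightarrow> R (xs ! i) (xs ! j)"
  shows "isomorphic (set xs) R {0..<n} B"
proof -
  have "graph_iso {0..<n} B (set xs) R (nth xs)"
    unfolding graph_iso_def using assms by (auto intro!: bij_betw_nth)
  then show ?thesis
    unfolding isomorphic_def using graph_iso_inv_into by blast
qed

lemma graph_connected_iso:
  assumes iso: "graph_iso V1 A1 V2 A2 f" and sg: "simple_graph V2 A2"
    and conn: "graph_connected V2 A2"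
  shows "graph_connected V1 A1"
proof -
  have bij: "bij_betw f V1 V2" and adj: "\<forall>x\<in>V1. \<forall>y\<in>V1. A1 x y \<longleftrightarrow> A2 (f x) (f y)"
    using iso unfolding graph_iso_def by auto
  have reach: "\<exists>y\<in>V1. w = f y \<and> A1\<^sup>*\<^sup>* x y" if "x \<in> V1" "A2\<^sup>*\<^sup>* (f x) w" for x w
    using that(2)
  proof (induction rule: rtranclp_induct)
    case base
    then show ?case using that(1) by blast
  next
    case (step w w')
    then obtain y where y: "y \<in> V1" "w = f y" "A1\<^sup>*\<^sup>* x y" by blast
    have "w' \<in> V2" using step.hyps(2) sg unfolding simple_graph_def by blast
    then obtain y' where y': "y' \<in> V1" "w' = f y'"
      using bij by (metis bij_betw_inv_into_right bij_betw_apply bij_betw_inv_into)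
    then have "A1 y y'" using adj y step.hyps(2) by blast
    then show ?case using y y' by (blast intro: rtranclp.rtrancl_into_rtrancl)
  qed
  have "A1\<^sup>*\<^sup>* x y" if x: "x \<in> V1" and y: "y \<in> V1" for x y
  proof -
    have "A2\<^sup>*\<^sup>* (f x) (f y)"
      using conn x y bij_betw_apply[OF bij] unfolding graph_connected_def by blast
    then obtain y' where "y' \<in> V1" "f y = f y'" "A1\<^sup>*\<^sup>* x y'" using reach x by blast
    then show ?thesis using y bij unfolding bij_betw_def by (metis inj_onD)
  qed
  moreover have "V1 \<noteq> {}" using conn bij unfolding graph_connected_def bij_betw_def by blast
  ultimately show ?thesis unfolding graph_connected_def by blast
qed

lemma card_neighbours_iso:
  assumes "graph_iso V1 A1 V2 A2 f" "T \<subseteq> V1" "e \<in> V1"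
  shows "card {x \<in> f ` T. A2 (f e) x} = card {y \<in> T. A1 e y}"
proof -
  have inj: "inj_on f V1" and adj: "\<forall>x\<in>V1. \<forall>y\<in>V1. A1 x y \<longleftrightarrow> A2 (f x) (f y)"
    using assms(1) unfolding graph_iso_def bij_betw_def by auto
  have "{x \<in> f ` T. A2 (f e) x} = f ` {y \<in> T. A1 e y}"
    using adj assms(2,3) by auto
  moreover have "inj_on f {y \<in> T. A1 e y}"
    by (rule inj_on_subset[OF inj]) (use assms(2) in auto)
  ultimately show ?thesis by (simp add: card_image)
qed

lemma odd_triangle_iso_iff:
  assumes iso: "graph_iso V1 A1 V2 A2 f" and "a \<in> V1" "b \<in> V1" "c \<in> V1"
  shows "odd_triangle V2 A2 (f a) (f b) (f c) \<longleftrightarrow> odd_triangle V1 A1 a b c"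
proof -
  have bij: "bij_betw f V1 V2" and adj: "\<forall>x\<in>V1. \<forall>y\<in>V1. A1 x y \<longleftrightarrow> A2 (f x) (f y)"
    using iso unfolding graph_iso_def by auto
  have tri: "triangle V2 A2 (f a) (f b) (f c) \<longleftrightarrow> triangle V1 A1 a b c"
    using assms(2-4) adj bij_betw_apply[OF bij] unfolding triangle_def by blast
  have "(\<exists>w\<in>V2. odd (card {x \<in> {f a, f b, f c}. A2 w x})) \<longleftrightarrow>
        (\<exists>e\<in>V1. odd (card {x \<in> {a, b, c}. A1 e x}))"
    using card_neighbours_iso[OF iso, of "{a, b, c}"] assms(2-4) bij
    by (auto simp: bij_betw_def)
  then show ?thesis using tri unfolding odd_triangle_def by blast
qed

section \<open>Triangles of line graphs\<close>

definition star_triple :: "nat set set \<Rightarrow> nat set \<Rightarrow> nat set \<Rightarrow> nat set \<Rightarrow> bool" where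
  "star_triple Ed p q t \<longleftrightarrow> p \<in> Ed \<and> q \<in> Ed \<and> t \<in> Ed \<and> p \<noteq> q \<and> q \<noteq> t \<and> p \<noteq> t
     \<and> p \<inter> q \<inter> t \<noteq> {}"

lemma edge_graph_edge:
  assumes "edge_graph W Ed" "e \<in> Ed"
  obtains u v where "e = {u, v}" "u \<noteq> v"
  using assms card_2_iff unfolding edge_graph_def by metis

lemma edge_graph_edge_at:
  assumes "edge_graph W Ed" "e \<in> Ed" "r \<in> e"
  obtains u where "e = {r, u}" "u \<noteq> r"
  using edge_graph_edge[OF assms(1,2)] assms(3) by (metis insertE insert_commute singletonD)

lemma Collect_mem_insert:
  "{x \<in> insert a B. P x} = (if P a then insert a {x \<in> B. P x} else {x \<in> B. P x})"
  by auto

lemma doubleton_inter_singleton: "x \<in> S \<Longrightarrow> y \<notin> S \<Longrightarrow> {x, y} \<inter> S = {x}"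
  by auto

lemma line_adj_one_endpoint:
  assumes "T \<subseteq> Ed" "\<forall>w\<in>T. w \<subseteq> X" "e \<in> Ed" "card e = 2" "e \<inter> X = {u}"
  shows "{w \<in> T. line_adj Ed e w} = {w \<in> T. u \<in> w}"
proof -
  have "line_adj Ed e w \<longleftrightarrow> u \<in> w" if w: "w \<in> T" for w
  proof -
    have meet: "e \<inter> w = {u} \<inter> w" using w assms(2,5) by blast
    have "e \<noteq> w"
    proof
      assume "e = w"
      then have "e \<subseteq> {u}" using meet by blast
      then have "card e \<le> 1" using card_mono[of "{u}" e] by simp
      then show False using assms(4) by simp
    qed
    moreover have "e \<inter> w \<noteq> {} \<longleftrightarrow> u \<in> w" using meet by auto
    moreover have "w \<in> Ed" using w assms(1) by blast
    ultimately show ?thesis using assms(3) unfolding line_adj_def by blast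
  qed
  then show ?thesis by blast
qed

lemma card_root_triangle_at:
  assumes "distinct [x, y, z]" "u \<in> {x, y, z}"
  shows "card {w \<in> {{x, z}, {x, y}, {y, z}}. u \<in> w} = 2"
  unfolding Collect_mem_insert using assms by (auto simp: doubleton_eq_iff)

lemma odd_card_star_at:
  assumes "distinct [r, a, b, c]" "u \<in> {r, a, b, c}"
  shows "odd (card {w \<in> {{r, a}, {r, b}, {r, c}}. u \<in> w})"
  unfolding Collect_mem_insert using assms by (auto simp: doubleton_eq_iff)

lemma even_card_line_adj_root_triangle:
  assumes eg: "edge_graph W Ed" and xyz: "distinct [x, y, z]"
    and T: "{{x, z}, {x, y}, {y, z}} \<subseteq> Ed" and e: "e \<in> Ed"
  shows "even (card {w \<in> {{x, z}, {x, y}, {y, z}}. line_adj Ed e w})"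
proof -
  let ?T = "{{x, z}, {x, y}, {y, z}}" and ?X = "{x, y, z}"
  obtain u v where uv: "e = {u, v}" "u \<noteq> v" using edge_graph_edge[OF eg e] .
  consider (inside) "e \<subseteq> ?X" | (outside) "e \<inter> ?X = {}" | (one) w where "e \<inter> ?X = {w}"
    using uv by blast
  then show ?thesis
  proof cases
    case inside
    then have "u \<in> ?X" "v \<in> ?X" using uv by auto
    then have "e \<in> ?T" using uv by (elim insertE emptyE) (simp_all add: insert_commute)
    moreover have "{w \<in> ?T. line_adj Ed e w} = ?T - {e}"
      using T e \<open>e \<in> ?T\<close> by (auto simp: line_adj_def)
    moreover have "card ?T = 3" using xyz by (simp add: doubleton_eq_iff)
    ultimately show ?thesis by simp
  next
    case outside
    then have "{w \<in> ?T. line_adj Ed e w} = {}" by (auto simp: line_adj_def)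
    then show ?thesis by (simp only: card.empty even_zero)
  next
    case (one w)
    have card: "card e = 2" using eg e unfolding edge_graph_def by blast
    have sub: "\<forall>w'\<in>?T. w' \<subseteq> ?X" by blast
    have eq: "{w' \<in> ?T. line_adj Ed e w'} = {w' \<in> ?T. w \<in> w'}"
      by (rule line_adj_one_endpoint[OF T sub e card one])
    have w: "w \<in> ?X" using one by blast
    show ?thesis unfolding eq card_root_triangle_at[OF xyz w] by simp
  qed
qed

lemma card_2_eq_doubleton:
  assumes "card e = 2" "x \<in> e" "y \<in> e" "x \<noteq> y"
  shows "e = {x, y}"
proof -
  obtain u v where "e = {u, v}" "u \<noteq> v" using assms(1) card_2_iff by metis
  then show ?thesis using assms(2-4) by auto
qed

lemma line_triangle_cases:
  assumes eg: "edge_graph W Ed" and tri: "triangle Ed (line_adj Ed) p q t"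
  obtains "p \<inter> q \<inter> t \<noteq> {}"
  | x y z where "distinct [x, y, z]" "p = {x, z}" "q = {x, y}" "t = {y, z}"
proof (cases "p \<inter> q \<inter> t = {}")
  case True
  have E: "p \<in> Ed" "q \<in> Ed" "t \<in> Ed" and adj: "p \<inter> q \<noteq> {}" "q \<inter> t \<noteq> {}" "t \<inter> p \<noteq> {}"
    using tri unfolding triangle_def line_adj_def by auto
  obtain x y z where xyz: "x \<in> p" "x \<in> q" "y \<in> q" "y \<in> t" "z \<in> t" "z \<in> p"
    using adj by blast
  then have d: "distinct [x, y, z]" using True by auto
  have card: "card p = 2" "card q = 2" "card t = 2"
    using eg E unfolding edge_graph_def by auto
  have "p = {x, z}" "q = {x, y}" "t = {y, z}"
    using card_2_eq_doubleton[OF card(1) xyz(1,6)] card_2_eq_doubleton[OF card(2) xyz(2,3)]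
      card_2_eq_doubleton[OF card(3) xyz(4,5)] d by auto
  then show ?thesis using that(2) d by blast
qed (use that(1) in blast)

lemma line_odd_triangle_is_star:
  assumes eg: "edge_graph W Ed" and odd: "odd_triangle Ed (line_adj Ed) p q t"
  shows "p \<inter> q \<inter> t \<noteq> {}"
proof -
  have tri: "triangle Ed (line_adj Ed) p q t" and T: "{p, q, t} \<subseteq> Ed"
    using odd unfolding odd_triangle_def triangle_def by auto
  obtain e where e: "e \<in> Ed" "odd (card {w \<in> {p, q, t}. line_adj Ed e w})"
    using odd unfolding odd_triangle_def by blast
  show ?thesis
  proof (cases rule: line_triangle_cases[OF eg tri])
    case (2 x y z)
    then show ?thesis
      using even_card_line_adj_root_triangle[OF eg 2(1) _ e(1)] T e(2) by simp
  qed
qed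

lemma star_triple_triangle:
  "star_triple Ed p q t \<Longrightarrow> triangle Ed (line_adj Ed) p q t"
  unfolding star_triple_def triangle_def line_adj_def by blast

section \<open>Root graphs with an even star triangle\<close>

lemma line_graph_edges_within:
  assumes conn: "graph_connected Ed (line_adj Ed)"
    and closed: "\<forall>e\<in>Ed. e \<inter> S \<noteq> {} \<longrightarrow> e \<subseteq> S"
    and p: "p \<in> Ed" "p \<subseteq> S" and e: "e \<in> Ed"
  shows "e \<subseteq> S"
proof -
  have "(line_adj Ed)\<^sup>*\<^sup>* p e" using conn p(1) e unfolding graph_connected_def by blast
  then show ?thesis
  proof (induction rule: rtranclp_induct)
    case base
    show ?case by (rule p(2))
  next
    case (step y z)
    then have "z \<in> Ed" "z \<inter> S \<noteq> {}" unfolding line_adj_def by blast+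
    then show ?case using closed by blast
  qed
qed

lemma edges_of_even_star:
  assumes eg: "edge_graph W Ed" and conn: "graph_connected Ed (line_adj Ed)"
    and d: "distinct [r, a, b, c]" and star: "{{r, a}, {r, b}, {r, c}} \<subseteq> Ed"
    and even: "\<forall>e\<in>Ed. even (card {w \<in> {{r, a}, {r, b}, {r, c}}. line_adj Ed e w})"
  shows "Ed \<subseteq> {{r, a}, {r, b}, {r, c}, {a, b}, {b, c}, {a, c}}"
proof
  let ?S = "{r, a, b, c}" and ?K = "{{r, a}, {r, b}, {r, c}}"
  have closed: "\<forall>e\<in>Ed. e \<inter> ?S \<noteq> {} \<longrightarrow> e \<subseteq> ?S"
  proof (intro ballI impI)
    fix e assume e: "e \<in> Ed" and meets: "e \<inter> ?S \<noteq> {}"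
    obtain u v where uv: "e = {u, v}" "u \<noteq> v" using edge_graph_edge[OF eg e] .
    show "e \<subseteq> ?S"
    proof (rule ccontr)
      assume "\<not> e \<subseteq> ?S"
      then consider "u \<in> ?S" "v \<notin> ?S" | "v \<in> ?S" "u \<notin> ?S" using meets uv(1) by blast
      then obtain w where w: "e \<inter> ?S = {w}" "w \<in> ?S"
        using uv(1) by (cases; metis doubleton_inter_singleton insert_commute)
      have card: "card e = 2" using eg e unfolding edge_graph_def by blast
      have sub: "\<forall>w'\<in>?K. w' \<subseteq> ?S" by blast
      have "even (card {w' \<in> ?K. line_adj Ed e w'})" using even e by blast
      then show False
        unfolding line_adj_one_endpoint[OF star sub e card w(1)] using odd_card_star_at[OF d w(2)]
        by simp
    qed
  qed
  fix e assume e: "e \<in> Ed"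
  have "e \<subseteq> ?S" by (rule line_graph_edges_within[OF conn closed _ _ e]) (use star in auto)
  moreover obtain u v where "e = {u, v}" "u \<noteq> v" using edge_graph_edge[OF eg e] .
  ultimately have "u \<in> ?S" "v \<in> ?S" "e = {u, v}" "u \<noteq> v" by auto
  then show "e \<in> {{r, a}, {r, b}, {r, c}, {a, b}, {b, c}, {a, c}}"
    by (elim insertE emptyE) (simp_all add: insert_commute)
qed

lemma isomorphic_line_graph_listing:
  assumes "distinct xs" "length xs = n"
    and "\<forall>i\<in>{..<n}. \<forall>j\<in>{..<n}. B i j \<longleftrightarrow> i \<noteq> j \<and> xs ! i \<inter> xs ! j \<noteq> {}"
  shows "isomorphic (set xs) (line_adj (set xs)) {0..<n} B"
proof (rule isomorphic_listing[OF assms(1,2)])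
  show "\<forall>i\<in>{..<n}. \<forall>j\<in>{..<n}. B i j \<longleftrightarrow> line_adj (set xs) (xs ! i) (xs ! j)"
    using assms by (simp add: line_adj_def nth_eq_iff_index_eq)
qed

lemma line_graph_F1:
  assumes "distinct [r, a, b, c]"
  shows "isomorphic {{r, a}, {r, b}, {r, c}, {a, b}} (line_adj {{r, a}, {r, b}, {r, c}, {a, b}})
    {0..<4} F1_adj"
proof -
  let ?xs = "[{r, a}, {r, b}, {r, c}, {a, b}]"
  have "isomorphic (set ?xs) (line_adj (set ?xs)) {0..<4} F1_adj"
    by (rule isomorphic_line_graph_listing)
      (use assms in \<open>simp_all add: lessThan_nat_numeral F1_adj_def doubleton_eq_iff\<close>)
  then show ?thesis by simp
qed

lemma line_graph_F2:
  assumes "distinct [r, a, b, c]"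
  shows "isomorphic {{r, b}, {r, a}, {r, c}, {b, c}, {a, b}}
    (line_adj {{r, b}, {r, a}, {r, c}, {b, c}, {a, b}}) {0..<5} F2_adj"
proof -
  let ?xs = "[{r, b}, {r, a}, {r, c}, {b, c}, {a, b}]"
  have "isomorphic (set ?xs) (line_adj (set ?xs)) {0..<5} F2_adj"
    by (rule isomorphic_line_graph_listing)
      (use assms in \<open>simp_all add: lessThan_nat_numeral F2_adj_def doubleton_eq_iff\<close>)
  then show ?thesis by simp
qed

lemma line_graph_F3:
  assumes "distinct [r, a, b, c]"
  shows "isomorphic {{r, a}, {b, c}, {r, b}, {a, c}, {r, c}, {a, b}}
    (line_adj {{r, a}, {b, c}, {r, b}, {a, c}, {r, c}, {a, b}}) {0..<6} F3_adj"
proof -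
  let ?xs = "[{r, a}, {b, c}, {r, b}, {a, c}, {r, c}, {a, b}]"
  have "isomorphic (set ?xs) (line_adj (set ?xs)) {0..<6} F3_adj"
    by (rule isomorphic_line_graph_listing)
      (use assms in \<open>simp_all add: lessThan_nat_numeral F3_adj_def doubleton_eq_iff\<close>)
  then show ?thesis by simp
qed

lemma line_graph_claw_triangle:
  assumes "distinct [r, a, b, c]"
  shows "isomorphic {{0, 1}, {1, 2}, {0, 2 :: nat}} (line_adj {{0, 1}, {1, 2}, {0, 2}})
    {{r, a}, {r, b}, {r, c}} (line_adj {{r, a}, {r, b}, {r, c}})"
proof -
  let ?xs = "[{0, 1}, {1, 2}, {0, 2 :: nat}]" and ?ys = "[{r, a}, {r, b}, {r, c}]"
  have xs: "isomorphic (set ?xs) (line_adj (set ?xs)) {0..<3 :: nat} (\<lambda>i j. i \<noteq> j)"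
    by (rule isomorphic_line_graph_listing) (simp_all add: lessThan_nat_numeral doubleton_eq_iff)
  have ys: "isomorphic (set ?ys) (line_adj (set ?ys)) {0..<3 :: nat} (\<lambda>i j. i \<noteq> j)"
    by (rule isomorphic_line_graph_listing)
      (use assms in \<open>simp_all add: lessThan_nat_numeral doubleton_eq_iff\<close>)
  show ?thesis using isomorphic_trans[OF xs isomorphic_sym[OF ys]] by simp
qed

lemma root_graph_on_four_vertices:
  assumes d: "distinct [r, a, b, c]" and star: "{{r, a}, {r, b}, {r, c}} \<subseteq> Ed"
    and sub: "Ed \<subseteq> {{r, a}, {r, b}, {r, c}, {a, b}, {b, c}, {a, c}}"
    and F1: "\<not> isomorphic Ed (line_adj Ed) {0..<4} F1_adj"
    and F2: "\<not> isomorphic Ed (line_adj Ed) {0..<5} F2_adj"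
    and F3: "\<not> isomorphic Ed (line_adj Ed) {0..<6} F3_adj"
  shows "Ed = {{r, a}, {r, b}, {r, c}}"
proof -
  have d': "distinct [r, b, c, a]" "distinct [r, a, c, b]" "distinct [r, b, a, c]"
    using d by auto
  show ?thesis
  proof (cases "{a, b} \<in> Ed"; cases "{b, c} \<in> Ed"; cases "{a, c} \<in> Ed")
    assume "{a, b} \<in> Ed" "{b, c} \<in> Ed" "{a, c} \<in> Ed"
    then have "Ed = {{r, a}, {b, c}, {r, b}, {a, c}, {r, c}, {a, b}}" using star sub by blast
    then have "isomorphic Ed (line_adj Ed) {0..<6} F3_adj" using line_graph_F3[OF d] by simp
    with F3 show ?thesis by contradiction
  next
    assume "{a, b} \<in> Ed" "{b, c} \<in> Ed" "{a, c} \<notin> Ed"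
    then have "Ed = {{r, b}, {r, a}, {r, c}, {b, c}, {a, b}}" using star sub by blast
    then have "isomorphic Ed (line_adj Ed) {0..<5} F2_adj" using line_graph_F2[OF d] by simp
    with F2 show ?thesis by contradiction
  next
    assume "{a, b} \<in> Ed" "{b, c} \<notin> Ed" "{a, c} \<in> Ed"
    then have "Ed = {{r, a}, {r, b}, {r, c}, {a, c}, {a, b}}" using star sub by blast
    then have "isomorphic Ed (line_adj Ed) {0..<5} F2_adj"
      using line_graph_F2[OF d'(3), unfolded insert_commute[of b a "{}"]] by simp
    with F2 show ?thesis by contradiction
  next
    assume "{a, b} \<in> Ed" "{b, c} \<notin> Ed" "{a, c} \<notin> Ed"
    then have "Ed = {{r, a}, {r, b}, {r, c}, {a, b}}" using star sub by blast
    then have "isomorphic Ed (line_adj Ed) {0..<4} F1_adj" using line_graph_F1[OF d] by simp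
    with F1 show ?thesis by contradiction
  next
    assume "{a, b} \<notin> Ed" "{b, c} \<in> Ed" "{a, c} \<in> Ed"
    then have "Ed = {{r, c}, {r, b}, {r, a}, {a, c}, {b, c}}" using star sub by blast
    then have "isomorphic Ed (line_adj Ed) {0..<5} F2_adj"
      using line_graph_F2[OF d'(1), unfolded insert_commute[of c a "{}"]] by simp
    with F2 show ?thesis by contradiction
  next
    assume "{a, b} \<notin> Ed" "{b, c} \<in> Ed" "{a, c} \<notin> Ed"
    then have "Ed = {{r, b}, {r, c}, {r, a}, {b, c}}" using star sub by blast
    then have "isomorphic Ed (line_adj Ed) {0..<4} F1_adj" using line_graph_F1[OF d'(1)] by simp
    with F1 show ?thesis by contradiction
  next
    assume "{a, b} \<notin> Ed" "{b, c} \<notin> Ed" "{a, c} \<in> Ed"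
    then have "Ed = {{r, a}, {r, c}, {r, b}, {a, c}}" using star sub by blast
    then have "isomorphic Ed (line_adj Ed) {0..<4} F1_adj" using line_graph_F1[OF d'(2)] by simp
    with F1 show ?thesis by contradiction
  next
    assume "{a, b} \<notin> Ed" "{b, c} \<notin> Ed" "{a, c} \<notin> Ed"
    then show ?thesis using star sub by blast
  qed
qed

lemma root_graph_with_odd_star_triangles:
  assumes eg: "edge_graph W Ed" and conn: "graph_connected Ed (line_adj Ed)"
    and F1: "\<not> isomorphic Ed (line_adj Ed) {0..<4} F1_adj"
    and F2: "\<not> isomorphic Ed (line_adj Ed) {0..<5} F2_adj"
    and F3: "\<not> isomorphic Ed (line_adj Ed) {0..<6} F3_adj"
  obtains W' Ed' where "edge_graph W' Ed'" "isomorphic Ed' (line_adj Ed') Ed (line_adj Ed)"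
    "\<And>p q t. star_triple Ed' p q t \<Longrightarrow> odd_triangle Ed' (line_adj Ed') p q t"
proof (cases "\<forall>p q t. star_triple Ed p q t \<longrightarrow> odd_triangle Ed (line_adj Ed) p q t")
  case True
  have "graph_iso Ed (line_adj Ed) Ed (line_adj Ed) id" unfolding graph_iso_def by simp
  then show ?thesis using that eg True unfolding isomorphic_def by blast
next
  case False
  then obtain p q t where st: "star_triple Ed p q t"
    and even: "\<not> odd_triangle Ed (line_adj Ed) p q t" by blast
  then obtain r where r: "r \<in> p" "r \<in> q" "r \<in> t" and E: "p \<in> Ed" "q \<in> Ed" "t \<in> Ed"
    unfolding star_triple_def by blast
  obtain a where a: "p = {r, a}" "a \<noteq> r" using edge_graph_edge_at[OF eg E(1) r(1)] .
  obtain b where b: "q = {r, b}" "b \<noteq> r" using edge_graph_edge_at[OF eg E(2) r(2)] .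
  obtain c where c: "t = {r, c}" "c \<noteq> r" using edge_graph_edge_at[OF eg E(3) r(3)] .
  have d: "distinct [r, a, b, c]"
    using st a b c unfolding star_triple_def by auto
  have star: "{{r, a}, {r, b}, {r, c}} \<subseteq> Ed" using E a(1) b(1) c(1) by blast
  have "\<forall>e\<in>Ed. even (card {w \<in> {{r, a}, {r, b}, {r, c}}. line_adj Ed e w})"
    using even star_triple_triangle[OF st] unfolding odd_triangle_def a(1) b(1) c(1) by blast
  then have Ed: "Ed = {{r, a}, {r, b}, {r, c}}"
    by (rule root_graph_on_four_vertices[OF d star edges_of_even_star[OF eg conn d star] F1 F2 F3])
  let ?T = "{{0, 1}, {1, 2}, {0, 2}} :: nat set set"
  have egT: "edge_graph {0, 1, 2} ?T" unfolding edge_graph_def by auto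
  have isoT: "isomorphic ?T (line_adj ?T) Ed (line_adj Ed)"
    unfolding Ed by (rule line_graph_claw_triangle[OF d])
  have "\<not> star_triple ?T p' q' t'" for p' q' t'
    unfolding star_triple_def by (auto simp: doubleton_eq_iff)
  then show ?thesis using that[OF egT isoT] by blast
qed

lemma line_graph_root_with_odd_star_triangles:
  assumes sg: "simple_graph V A" and conn: "graph_connected V A"
    and line: "\<exists>W Ed. edge_graph W Ed \<and> isomorphic Ed (line_adj Ed) V A"
    and F1: "\<not> isomorphic V A {0..<4} F1_adj"
    and F2: "\<not> isomorphic V A {0..<5} F2_adj"
    and F3: "\<not> isomorphic V A {0..<6} F3_adj"
  obtains W Ed \<phi> where "edge_graph W Ed" "graph_iso Ed (line_adj Ed) V A \<phi>"
    "\<And>p q t. star_triple Ed p q t \<Longrightarrow> odd_triangle V A (\<phi> p) (\<phi> q) (\<phi> t)"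
proof -
  obtain W Ed \<phi> where eg: "edge_graph W Ed" and iso: "graph_iso Ed (line_adj Ed) V A \<phi>"
    using line unfolding isomorphic_def by blast
  have isoE: "isomorphic Ed (line_adj Ed) V A" using iso unfolding isomorphic_def by blast
  have "graph_connected Ed (line_adj Ed)" by (rule graph_connected_iso[OF iso sg conn])
  moreover have "\<not> isomorphic Ed (line_adj Ed) {0..<4} F1_adj"
    "\<not> isomorphic Ed (line_adj Ed) {0..<5} F2_adj" "\<not> isomorphic Ed (line_adj Ed) {0..<6} F3_adj"
    using F1 F2 F3 isomorphic_trans[OF isomorphic_sym[OF isoE]] by blast+
  ultimately obtain W' Ed' where eg': "edge_graph W' Ed'"
    and root: "isomorphic Ed' (line_adj Ed') Ed (line_adj Ed)"
    and odd: "\<And>p q t. star_triple Ed' p q t \<Longrightarrow> odd_triangle Ed' (line_adj Ed') p q t"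
    using root_graph_with_odd_star_triangles[OF eg] by blast
  obtain \<phi>' where iso': "graph_iso Ed' (line_adj Ed') V A \<phi>'"
    using isomorphic_trans[OF root isoE] unfolding isomorphic_def by blast
  have "odd_triangle V A (\<phi>' p) (\<phi>' q) (\<phi>' t)" if "star_triple Ed' p q t" for p q t
    using odd[OF that] odd_triangle_iso_iff[OF iso'] that unfolding star_triple_def by blast
  then show ?thesis using that eg' iso' by blast
qed

section \<open>Gains\<close>

locale central_involution =
  fixes s :: "'g::group_add"
  assumes central: "s + g = g + s" and involution: "s + s = 0"
begin

lemma add_minus_add_self: "s + - a + s = - a"
proof -
  have "s + - a + s = s + (- a + s)" by (rule add.assoc)
  also have "- a + s = s + - a" by (rule central[symmetric])
  also have "s + (s + - a) = - a" by (simp only: add.assoc[symmetric] involution add_0_left)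
  finally show ?thesis .
qed

lemma eq_of_add_add_minus: "a + z + - b = s \<Longrightarrow> z = s + - a + b"
proof -
  assume eq: "a + z + - b = s"
  have "z = - a + (a + z + - b) + b" by (simp add: add.assoc del: add_uminus_conv_diff)
  also have "\<dots> = - a + s + b" by (simp only: eq)
  also have "- a + s = s + - a" by (rule central[symmetric])
  finally show ?thesis .
qed

lemma add_left_commute_self: "a + (s + b) = s + (a + b)"
proof -
  have "a + (s + b) = a + s + b" by (rule add.assoc[symmetric])
  also have "a + s = s + a" by (rule central[symmetric])
  finally show ?thesis by (simp only: add.assoc)
qed

lemma phase_triangle_gain: "(s + - x + y) + (s + - y + z) + (s + - z + x) = s"
proof -
  have "(s + - x + y) + (s + - y + z) = s + (s + (- x + y + (- y + z)))"
    using add_left_commute_self[of "- x + y" "- y + z"] by (simp only: add.assoc)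
  also have "\<dots> = - x + y + (- y + z)" by (simp only: add.assoc[symmetric] involution add_0_left)
  also have "\<dots> = - x + z" by (simp add: add.assoc)
  finally have first_two: "(s + - x + y) + (s + - y + z) = - x + z" .
  have "(s + - x + y) + (s + - y + z) + (s + - z + x) = - x + z + (s + (- z + x))"
    unfolding first_two by (simp only: add.assoc)
  also have "\<dots> = s + (- x + z + (- z + x))" by (rule add_left_commute_self)
  also have "\<dots> = s" by (simp add: add.assoc)
  finally show ?thesis .
qed

lemma triangle_gain_if_gain_line_graph:
  assumes "gain_line_graph s V A \<zeta>" and odd: "odd_triangle V A a b c"
  shows "triangle_gain \<zeta> a b c = s"
proof -
  obtain W Ed \<phi> and H :: "nat \<Rightarrow> nat set \<Rightarrow> 'g" where eg: "edge_graph W Ed"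
    and iso: "graph_iso Ed (line_adj Ed) V A \<phi>"
    and phases: "\<forall>p\<in>Ed. \<forall>q\<in>Ed. \<forall>r. p \<noteq> q \<and> r \<in> p \<and> r \<in> q \<longrightarrow>
      \<zeta> (\<phi> p) (\<phi> q) = s + - H r p + H r q"
    using assms(1) unfolding gain_line_graph_def by blast
  have phase: "\<zeta> (\<phi> p) (\<phi> q) = s + - H r p + H r q"
    if "p \<in> Ed" "q \<in> Ed" "p \<noteq> q" "r \<in> p" "r \<in> q" for p q r
    using phases that by blast
  have im: "V = \<phi> ` Ed" using iso unfolding graph_iso_def bij_betw_def by blast
  have "a \<in> V" "b \<in> V" "c \<in> V" using odd unfolding odd_triangle_def triangle_def by auto
  then obtain p q t where pqt: "p \<in> Ed" "q \<in> Ed" "t \<in> Ed"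
    and abc: "a = \<phi> p" "b = \<phi> q" "c = \<phi> t"
    unfolding im by blast
  have odd': "odd_triangle Ed (line_adj Ed) p q t"
    using odd unfolding abc odd_triangle_iso_iff[OF iso pqt] .
  then obtain r where r: "r \<in> p" "r \<in> q" "r \<in> t" using line_odd_triangle_is_star[OF eg] by blast
  have ne: "p \<noteq> q" "q \<noteq> t" "t \<noteq> p"
    using odd' unfolding odd_triangle_def triangle_def line_adj_def by auto
  have "triangle_gain \<zeta> a b c =
      (s + - H r p + H r q) + (s + - H r q + H r t) + (s + - H r t + H r p)"
    unfolding triangle_gain_def abc
    by (simp only: phase[OF pqt(1,2) ne(1) r(1,2)] phase[OF pqt(2,3) ne(2) r(2,3)]
        phase[OF pqt(3,1) ne(3) r(3,1)])
  then show ?thesis by (simp only: phase_triangle_gain)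
qed

lemma gain_line_graph_if_star_triangle_gains:
  assumes gain: "gain_graph V A \<zeta>" and eg: "edge_graph W Ed"
    and iso: "graph_iso Ed (line_adj Ed) V A \<phi>"
    and stars: "\<And>p q t. star_triple Ed p q t \<Longrightarrow> triangle_gain \<zeta> (\<phi> p) (\<phi> q) (\<phi> t) = s"
  shows "gain_line_graph s V A \<zeta>"
proof -
  define p0 where "p0 r = (SOME p. p \<in> Ed \<and> r \<in> p)" for r
  \<comment> \<open>the phase at r is the gain from a reference edge p0 r, with the convention \<zeta>(p0, p0) = s\<close>
  define H where "H r q = (if q = p0 r then s else \<zeta> (\<phi> (p0 r)) (\<phi> q))" for r q
  have anti: "\<zeta> (\<phi> q) (\<phi> p) = - \<zeta> (\<phi> p) (\<phi> q)"
    if "p \<in> Ed" "q \<in> Ed" "p \<noteq> q" "r \<in> p" "r \<in> q" for p q r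
  proof -
    have "line_adj Ed p q" using that unfolding line_adj_def by blast
    then have "A (\<phi> p) (\<phi> q)" using iso that(1,2) unfolding graph_iso_def by blast
    then show ?thesis using gain unfolding gain_graph_def by blast
  qed
  have "\<zeta> (\<phi> p) (\<phi> q) = s + - H r p + H r q"
    if pq: "p \<in> Ed" "q \<in> Ed" "p \<noteq> q" and r: "r \<in> p" "r \<in> q" for p q r
  proof -
    have p0: "p0 r \<in> Ed" "r \<in> p0 r"
      using someI_ex[of "\<lambda>p. p \<in> Ed \<and> r \<in> p"] pq(1) r(1) unfolding p0_def by blast+
    consider "p = p0 r" | "q = p0 r" | "p \<noteq> p0 r" "q \<noteq> p0 r" by blast
    then show ?thesis
    proof cases
      case 1
      then have "H r p = s" "H r q = \<zeta> (\<phi> p) (\<phi> q)" using pq(3) unfolding H_def by auto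
      then show ?thesis by simp
    next
      case 2
      then have "H r p = \<zeta> (\<phi> q) (\<phi> p)" "H r q = s" using pq(3) unfolding H_def by auto
      then have "s + - H r p + H r q = - \<zeta> (\<phi> q) (\<phi> p)" by (simp only: add_minus_add_self)
      then show ?thesis using anti[OF pq(2,1) pq(3)[symmetric] r(2,1)] by simp
    next
      case 3
      have "star_triple Ed (p0 r) p q" using pq r p0 3 unfolding star_triple_def by blast
      then have "\<zeta> (\<phi> (p0 r)) (\<phi> p) + \<zeta> (\<phi> p) (\<phi> q) + \<zeta> (\<phi> q) (\<phi> (p0 r)) = s"
        using stars unfolding triangle_gain_def by blast
      then have "\<zeta> (\<phi> (p0 r)) (\<phi> p) + \<zeta> (\<phi> p) (\<phi> q) + - \<zeta> (\<phi> (p0 r)) (\<phi> q) = s"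
        using anti[OF p0(1) pq(2) 3(2)[symmetric] p0(2) r(2)] by simp
      then have "\<zeta> (\<phi> p) (\<phi> q) = s + - \<zeta> (\<phi> (p0 r)) (\<phi> p) + \<zeta> (\<phi> (p0 r)) (\<phi> q)"
        by (rule eq_of_add_add_minus)
      then show ?thesis using 3 unfolding H_def by simp
    qed
  qed
  then show ?thesis unfolding gain_line_graph_def using eg iso by blast
qed

end

theorem mainTheorem6:
  fixes s :: "'g::group_add"
    and V :: "'v set" and A :: "'v \<Rightarrow> 'v \<Rightarrow> bool" and \<zeta> :: "'v \<Rightarrow> 'v \<Rightarrow> 'g"
  assumes central: "\<forall>g::'g. s + g = g + s"
    and invol: "s + s = 0" "s \<noteq> 0"
    and gain: "gain_graph V A \<zeta>"
    and conn: "graph_connected V A"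
    and line: "\<exists>W Ed. edge_graph W Ed \<and> isomorphic Ed (line_adj Ed) V A"
    and notF1: "\<not> isomorphic V A {0..<4} F1_adj"
    and notF2: "\<not> isomorphic V A {0..<5} F2_adj"
    and notF3: "\<not> isomorphic V A {0..<6} F3_adj"
  shows "gain_line_graph s V A \<zeta> \<longleftrightarrow>
    (\<forall>a b c. odd_triangle V A a b c \<longrightarrow> triangle_gain \<zeta> a b c = s)"
proof -
  interpret central_involution s
    using central invol(1) by (intro central_involution.intro) blast+
  obtain W Ed \<phi> where eg: "edge_graph W Ed" and iso: "graph_iso Ed (line_adj Ed) V A \<phi>"
    and odd: "\<And>p q t. star_triple Ed p q t \<Longrightarrow> odd_triangle V A (\<phi> p) (\<phi> q) (\<phi> t)"
    using line_graph_root_with_odd_star_triangles[OF _ conn line notF1 notF2 notF3] gain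
    unfolding gain_graph_def by blast
  show ?thesis
  proof
    assume "\<forall>a b c. odd_triangle V A a b c \<longrightarrow> triangle_gain \<zeta> a b c = s"
    then show "gain_line_graph s V A \<zeta>"
      using gain_line_graph_if_star_triangle_gains[OF gain eg iso] odd by blast
  next
    assume "gain_line_graph s V A \<zeta>"
    then show "\<forall>a b c. odd_triangle V A a b c \<longrightarrow> triangle_gain \<zeta> a b c = s"
      by (intro allI impI) (rule triangle_gain_if_gain_line_graph)
  qed
qed

end
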